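(* For every positive integer $k$, there exist a binary matrix $A_k$ and binary column vectors $x_1,\dots,x_k$ such that $R_{bool}(A_k|x_i)=R_{bool}(A_k)=4$ for all $1\le i\le k$, but $R_{bool}(A_k|x_1,\dots,x_k)\ge k$.
   Context: For a binary $n\times m$ matrix $A$, $R_{bool}(A)$ is the least $k$ such that $A=UV$ with $U\in\{0,1\}^{n\times k}$, $V\in\{0,1\}^{k\times m}$ and the product computed in the Boolean semiring ($1+1=1$). $(A|x_1,\dots,x_t)$ denotes $A$ with the columns $x_1,\dots,x_t$ appended on the right. *)

theory Defs
  imports Main
begin

text \<open>A binary n x m matrix is represented as a function nat => nat => bool,
  only entries i < n, j < m being relevant. True = 1, False = 0.\<close>

definition bool_factorizes :: "nat \<Rightarrow> nat \<Rightarrow> (nat \<Rightarrow> nat \<Rightarrow> bool) \<Rightarrow> nat \<Rightarrow> bool" where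
  "bool_factorizes n m A k \<longleftrightarrow>
     (\<exists>U V :: nat \<Rightarrow> nat \<Rightarrow> bool.
        \<forall>i<n. \<forall>j<m. A i j = (\<exists>l<k. U i l \<and> V l j))"

definition bool_rank :: "nat \<Rightarrow> nat \<Rightarrow> (nat \<Rightarrow> nat \<Rightarrow> bool) \<Rightarrow> nat" where
  "bool_rank n m A = (LEAST k. bool_factorizes n m A k)"

text \<open>(A | x_0, ..., x_{t-1}) for an n x m matrix A: column m + c is the vector x c
  (x c i is its i-th entry).\<close>
definition append_cols :: "nat \<Rightarrow> (nat \<Rightarrow> nat \<Rightarrow> bool) \<Rightarrow> (nat \<Rightarrow> nat \<Rightarrow> bool) \<Rightarrow> nat \<Rightarrow> nat \<Rightarrow> bool" where
  "append_cols m A x i j = (if j < m then A i j else x (j - m) i)"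

end

theory Submission
  imports Defs
begin

(* The rows of A_k are k copies of 1100 followed by 1000, 0010 and 0001, and
   x_c = e_c + e_k. Lower bounds on the Boolean rank come from fooling sets: one-entries no
   two of which fit into a common all-ones rectangle need pairwise distinct rank-one factors.
   The one-entries of A_k in rows 0, k, k+1, k+2 form a fooling set of size 4, and a single
   rectangle (rows c and k, column 0 and the new column) covers the ones of x_c, so each
   (A_k|x_c) still has rank 4. After appending all columns, the ones (c, x_c) with c < k
   form a fooling set of size k. *)

definition fooling_set ::
  "nat \<Rightarrow> nat \<Rightarrow> (nat \<Rightarrow> nat \<Rightarrow> bool) \<Rightarrow> nat \<Rightarrow> (nat \<Rightarrow> nat) \<Rightarrow> (nat \<Rightarrow> nat) \<Rightarrow> bool" where
  "fooling_set n m A p f g \<longleftrightarrow>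
     (\<forall>t<p. f t < n \<and> g t < m \<and> A (f t) (g t)) \<and>
     (\<forall>s<p. \<forall>t<p. s \<noteq> t \<longrightarrow> \<not> A (f s) (g t) \<or> \<not> A (f t) (g s))"

lemma bool_factorizes_ncols: "bool_factorizes n m A m"
  unfolding bool_factorizes_def
  by (rule exI[of _ A], rule exI[of _ "\<lambda>l j. l = j"]) auto

lemma bool_factorizes_bool_rank: "bool_factorizes n m A (bool_rank n m A)"
  unfolding bool_rank_def using bool_factorizes_ncols by (rule LeastI)

lemma bool_rank_le: "bool_factorizes n m A r \<Longrightarrow> bool_rank n m A \<le> r"
  unfolding bool_rank_def by (rule Least_le)

lemma fooling_set_le_bool_factorizes:
  assumes fool: "fooling_set n m A p f g" and fac: "bool_factorizes n m A r"
  shows "p \<le> r"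
proof -
  obtain U V where UV: "\<forall>i<n. \<forall>j<m. A i j = (\<exists>l<r. U i l \<and> V l j)"
    using fac unfolding bool_factorizes_def by blast
  have ones: "\<And>t. t < p \<Longrightarrow> f t < n \<and> g t < m \<and> A (f t) (g t)"
    and fooling: "\<And>s t. s < p \<Longrightarrow> t < p \<Longrightarrow> s \<noteq> t \<Longrightarrow> \<not> A (f s) (g t) \<or> \<not> A (f t) (g s)"
    using fool unfolding fooling_set_def by blast+
  have "\<forall>t. \<exists>l. t < p \<longrightarrow> l < r \<and> U (f t) l \<and> V l (g t)"
    using ones UV by blast
  then obtain h where h: "\<And>t. t < p \<Longrightarrow> h t < r \<and> U (f t) (h t) \<and> V (h t) (g t)"
    by metis
  have "inj_on h {..<p}"
  proof (rule inj_onI, rule ccontr)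
    fix s t assume s: "s \<in> {..<p}" and t: "t \<in> {..<p}" and "h s = h t" "s \<noteq> t"
    then have "A (f s) (g t)" and "A (f t) (g s)"
      using UV ones[of s] ones[of t] h[of s] h[of t] by auto
    then show False using fooling[of s t] s t \<open>s \<noteq> t\<close> by auto
  qed
  moreover have "h ` {..<p} \<subseteq> {..<r}" using h by auto
  ultimately show "p \<le> r"
    using card_inj_on_le[of h "{..<p}" "{..<r}"] by simp
qed

lemma fooling_set_le_bool_rank: "fooling_set n m A p f g \<Longrightarrow> p \<le> bool_rank n m A"
  using fooling_set_le_bool_factorizes bool_factorizes_bool_rank by blast

lemma bool_factorizes_append_colsD:
  "bool_factorizes n (m + t) (append_cols m A x) r \<Longrightarrow> bool_factorizes n m A r"
  unfolding bool_factorizes_def append_cols_def by (metis trans_less_add1)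

lemma bool_rank_le_append_cols:
  "bool_rank n m A \<le> bool_rank n (m + t) (append_cols m A x)"
  by (rule bool_rank_le, rule bool_factorizes_append_colsD, rule bool_factorizes_bool_rank)

definition example_matrix :: "nat \<Rightarrow> nat \<Rightarrow> nat \<Rightarrow> bool" where
  "example_matrix k i j \<longleftrightarrow>
     (i < k \<and> j < 2) \<or> (i = k \<and> j = 0) \<or> (i = k + 1 \<and> j = 2) \<or> (i = k + 2 \<and> j = 3)"

definition example_column :: "nat \<Rightarrow> nat \<Rightarrow> nat \<Rightarrow> bool" where
  "example_column k c i \<longleftrightarrow> i = c \<or> i = k"

lemma less_4_cases: "(t::nat) < 4 \<longleftrightarrow> t = 0 \<or> t = 1 \<or> t = 2 \<or> t = 3"
  by auto

lemma ex_less_4: "(\<exists>l<(4::nat). P l) \<longleftrightarrow> P 0 \<or> P 1 \<or> P 2 \<or> P 3"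
  by (auto simp: less_4_cases)

lemma fooling_set_example_matrix:
  "0 < k \<Longrightarrow> fooling_set (k + 3) 4 (example_matrix k) 4
     (\<lambda>t. if t = 0 then 0 else k + t - 1) (\<lambda>t. if t = 0 then 1 else if t = 1 then 0 else t)"
  unfolding fooling_set_def example_matrix_def less_4_cases by auto

lemma bool_factorizes_example_append_column:
  assumes "c < k"
  shows "bool_factorizes (k + 3) (4 + 1) (append_cols 4 (example_matrix k) (\<lambda>_. example_column k c)) 4"
  unfolding bool_factorizes_def
  apply (rule exI[of _ "\<lambda>i l. (l = 0 \<and> i < k) \<or> (l = 1 \<and> (i = k \<or> i = c)) \<or>
                               (l = 2 \<and> i = k + 1) \<or> (l = 3 \<and> i = k + 2)"])
  apply (rule exI[of _ "\<lambda>l j. (l = 0 \<and> j < 2) \<or> (l = 1 \<and> (j = 0 \<or> j = 4)) \<or>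
                               (l = 2 \<and> j = 2) \<or> (l = 3 \<and> j = 3)"])
  using assms by (auto simp: ex_less_4 append_cols_def example_matrix_def example_column_def)

lemma fooling_set_example_all_columns:
  "fooling_set (k + 3) (4 + k) (append_cols 4 (example_matrix k) (example_column k)) k
     (\<lambda>t. t) (\<lambda>t. 4 + t)"
  unfolding fooling_set_def append_cols_def example_column_def by auto

theorem theorem6:
  fixes k :: nat
  assumes "k \<ge> 1"
  shows "\<exists>(n::nat) (m::nat) (A :: nat \<Rightarrow> nat \<Rightarrow> bool) (x :: nat \<Rightarrow> nat \<Rightarrow> bool).
           bool_rank n m A = 4 \<and>
           (\<forall>c<k. bool_rank n (m + 1) (append_cols m A (\<lambda>_. x c)) = 4) \<and>
           bool_rank n (m + k) (append_cols m A x) \<ge> k"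
proof (intro exI conjI allI impI)
  let ?A = "example_matrix k"
  have "0 < k" using assms by simp
  then have rank_ge: "4 \<le> bool_rank (k + 3) 4 ?A"
    by (rule fooling_set_le_bool_rank[OF fooling_set_example_matrix])
  have rank_append_le: "bool_rank (k + 3) (4 + 1) (append_cols 4 ?A (\<lambda>_. example_column k c)) \<le> 4"
    if "c < k" for c
    using bool_factorizes_example_append_column[OF that] by (rule bool_rank_le)
  have rank_mono: "bool_rank (k + 3) 4 ?A \<le>
      bool_rank (k + 3) (4 + 1) (append_cols 4 ?A (\<lambda>_. example_column k c))" for c
    by (rule bool_rank_le_append_cols)
  show "bool_rank (k + 3) 4 ?A = 4"
    using rank_ge rank_append_le[OF \<open>0 < k\<close>] rank_mono[of 0] by linarith
  fix c assume "c < k"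
  then show "bool_rank (k + 3) (4 + 1) (append_cols 4 ?A (\<lambda>_. example_column k c)) = 4"
    using rank_ge rank_append_le[of c] rank_mono[of c] by linarith
next
  show "k \<le> bool_rank (k + 3) (4 + k) (append_cols 4 (example_matrix k) (example_column k))"
    using fooling_set_example_all_columns by (rule fooling_set_le_bool_rank)
qed

end
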